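(* There exists a constant $c>0$ such that for all $N$ large enough, all $n\in\mathbb{Z}_+$ and every initial law of $Y(0)$, a Markov chain $Y$ on $\{0,\dots,N-4\}$ with kernel $R$ satisfies $$\mathbb{P}[\tau_0^Y>n]\le e^{1-cn/N^3},\qquad \tau_0^Y=\inf\{n\in\mathbb{Z}_+: Y(n)=0\}.$$
   Context: $R$ is the birth–death Markov kernel on $\{0,\dots,N-4\}$ with $R(x,x-1)=\frac{x(N-x)}{N(N-1)}$, $R(x,x+1)=\frac{N-x-1}{N(N-1)}$ for $x\le N-5$, all other off-diagonal entries $0$, and diagonal entries making rows sum to 1. *)

theory Defs
  imports Complex_Main "HOL-Library.FuncSet"
begin

definition Rdown :: "nat \<Rightarrow> nat \<Rightarrow> real" where
  "Rdown N x = real x * (real N - real x) / (real N * (real N - 1))"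

definition Rup :: "nat \<Rightarrow> nat \<Rightarrow> real" where
  "Rup N x = (if x + 5 \<le> N then (real N - real x - 1) / (real N * (real N - 1)) else 0)"

definition R :: "nat \<Rightarrow> nat \<Rightarrow> nat \<Rightarrow> real" where
  "R N x y =
    (if x \<le> N - 4 \<and> y \<le> N - 4 then
       (if y + 1 = x then Rdown N x
        else if y = x + 1 then Rup N x
        else if y = x then 1 - Rdown N x - Rup N x
        else 0)
     else 0)"

definition init_law :: "nat \<Rightarrow> (nat \<Rightarrow> real) \<Rightarrow> bool" where
  "init_law N \<mu> \<longleftrightarrow> (\<forall>x. 0 \<le> \<mu> x) \<and> (\<forall>x. N - 4 < x \<longrightarrow> \<mu> x = 0)
                      \<and> (\<Sum>x\<le>N - 4. \<mu> x) = 1"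

definition path_prob :: "nat \<Rightarrow> (nat \<Rightarrow> real) \<Rightarrow> nat \<Rightarrow> (nat \<Rightarrow> nat) \<Rightarrow> real" where
  "path_prob N \<mu> n p = \<mu> (p 0) * (\<Prod>i<n. R N (p i) (p (Suc i)))"

text \<open>P[tau_0 > n] = P[Y(0) /= 0, ..., Y(n) /= 0]: total mass of paths avoiding 0 up to time n.\<close>
definition tail_hit0 :: "nat \<Rightarrow> (nat \<Rightarrow> real) \<Rightarrow> nat \<Rightarrow> real" where
  "tail_hit0 N \<mu> n = (\<Sum>p \<in> Pi\<^sub>E {..n} (\<lambda>_. {1..N - 4}). path_prob N \<mu> n p)"

end

theory Submission
  imports Defs
begin

text \<open>Let Y be killed on hitting 0 and take the Lyapunov function V x = 2N - 1 + x on
{1..N-4}. Away from the boundary the drift of R is strictly downwards, by at least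
1/(N(N-1)), while at x = 1 the chain is killed with probability 1/N and loses V 1 = 2N;
in both cases one step shrinks V by the factor 1 - 1/(3N^3). Iterating, the killed mean
of V after n steps is at most (1 - 1/(3N^3))^n * 3N, and since V \<ge> 2N on the surviving
states, P[\<tau> > n] \<le> 3/2 * (1 - 1/(3N^3))^n \<le> e * exp(-n/(3N^3)).\<close>

lemma sum_PiE_insert:
  assumes "k \<notin> I"
  shows "(\<Sum>p\<in>Pi\<^sub>E (insert k I) T. h p) = (\<Sum>q\<in>Pi\<^sub>E I T. \<Sum>y\<in>T k. h (q(k := y)))"
proof -
  have "(\<Sum>p\<in>Pi\<^sub>E (insert k I) T. h p) =
      (\<Sum>x\<in>T k \<times> Pi\<^sub>E I T. h ((\<lambda>(y, g). g(k := y)) x))"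
    unfolding PiE_insert_eq by (rule sum.reindex[OF inj_combinator[OF assms], unfolded comp_def])
  also have "\<dots> = (\<Sum>y\<in>T k. \<Sum>q\<in>Pi\<^sub>E I T. h (q(k := y)))"
    by (simp add: sum.cartesian_product split_def)
  finally show ?thesis
    by (simp add: sum.swap[of _ "T k"])
qed

definition killed_mean ::
    "('a \<Rightarrow> 'a \<Rightarrow> real) \<Rightarrow> 'a set \<Rightarrow> ('a \<Rightarrow> real) \<Rightarrow> nat \<Rightarrow> ('a \<Rightarrow> real) \<Rightarrow> real" where
  "killed_mean K S \<mu> n g =
     (\<Sum>p\<in>Pi\<^sub>E {..n} (\<lambda>_. S). \<mu> (p 0) * (\<Prod>i<n. K (p i) (p (Suc i))) * g (p n))"

definition killed_step :: "('a \<Rightarrow> 'a \<Rightarrow> real) \<Rightarrow> 'a set \<Rightarrow> ('a \<Rightarrow> real) \<Rightarrow> 'a \<Rightarrow> real" where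
  "killed_step K S g x = (\<Sum>y\<in>S. K x y * g y)"

lemma killed_mean_0: "killed_mean K S \<mu> 0 g = (\<Sum>x\<in>S. \<mu> x * g x)"
proof -
  have "{..0::nat} = insert 0 {}" by auto
  then have "killed_mean K S \<mu> 0 g = (\<Sum>p\<in>Pi\<^sub>E (insert (0::nat) {}) (\<lambda>_. S). \<mu> (p 0) * g (p 0))"
    unfolding killed_mean_def by simp
  also have "\<dots> = (\<Sum>x\<in>S. \<mu> x * g x)"
    by (subst sum_PiE_insert) auto
  finally show ?thesis .
qed

lemma killed_mean_Suc: "killed_mean K S \<mu> (Suc n) g = killed_mean K S \<mu> n (killed_step K S g)"
proof -
  have prod_upd: "(\<Prod>i<n. K ((q(Suc n := y)) i) ((q(Suc n := y)) (Suc i))) =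
      (\<Prod>i<n. K (q i) (q (Suc i)))" for q :: "nat \<Rightarrow> 'a" and y
    by (rule prod.cong) auto
  have "killed_mean K S \<mu> (Suc n) g = (\<Sum>q\<in>Pi\<^sub>E {..n} (\<lambda>_. S). \<Sum>y\<in>S.
      \<mu> (q 0) * (\<Prod>i<n. K (q i) (q (Suc i))) * (K (q n) y * g y))"
    unfolding killed_mean_def atMost_Suc
    by (subst sum_PiE_insert) (auto simp: prod.lessThan_Suc prod_upd mult_ac)
  then show ?thesis
    unfolding killed_mean_def killed_step_def by (simp add: sum_distrib_left)
qed

lemma killed_mean_cmult: "killed_mean K S \<mu> n (\<lambda>x. c * g x) = c * killed_mean K S \<mu> n g"
  unfolding killed_mean_def by (simp add: sum_distrib_left mult_ac)

lemma killed_mean_mono: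
  assumes "\<And>x. x \<in> S \<Longrightarrow> 0 \<le> \<mu> x" and "\<And>x y. x \<in> S \<Longrightarrow> y \<in> S \<Longrightarrow> 0 \<le> K x y"
    and "\<And>x. x \<in> S \<Longrightarrow> g x \<le> h x"
  shows "killed_mean K S \<mu> n g \<le> killed_mean K S \<mu> n h"
  unfolding killed_mean_def
proof (rule sum_mono)
  fix p assume "p \<in> Pi\<^sub>E {..n} (\<lambda>_. S)"
  then have p: "\<And>i. i \<le> n \<Longrightarrow> p i \<in> S" by auto
  have "0 \<le> \<mu> (p 0) * (\<Prod>i<n. K (p i) (p (Suc i)))"
    using assms(1,2) p by (intro mult_nonneg_nonneg prod_nonneg) auto
  then show "\<mu> (p 0) * (\<Prod>i<n. K (p i) (p (Suc i))) * g (p n)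
      \<le> \<mu> (p 0) * (\<Prod>i<n. K (p i) (p (Suc i))) * h (p n)"
    using assms(3) p by (intro mult_left_mono) auto
qed

lemma killed_mean_lyapunov_decay:
  assumes \<mu>: "\<And>x. x \<in> S \<Longrightarrow> 0 \<le> \<mu> x" and K: "\<And>x y. x \<in> S \<Longrightarrow> y \<in> S \<Longrightarrow> 0 \<le> K x y"
    and "0 \<le> l" and drift: "\<And>x. x \<in> S \<Longrightarrow> killed_step K S V x \<le> l * V x"
  shows "killed_mean K S \<mu> n V \<le> l ^ n * (\<Sum>x\<in>S. \<mu> x * V x)"
proof (induction n)
  case 0
  then show ?case by (simp add: killed_mean_0)
next
  case (Suc n)
  have "killed_mean K S \<mu> (Suc n) V \<le> killed_mean K S \<mu> n (\<lambda>x. l * V x)"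
    unfolding killed_mean_Suc using drift by (intro killed_mean_mono[OF \<mu> K])
  also have "\<dots> \<le> l * (l ^ n * (\<Sum>x\<in>S. \<mu> x * V x))"
    unfolding killed_mean_cmult using Suc \<open>0 \<le> l\<close> by (rule mult_left_mono)
  finally show ?case by simp
qed

lemma killed_mass_le_lyapunov:
  assumes \<mu>: "\<And>x. x \<in> S \<Longrightarrow> 0 \<le> \<mu> x" and K: "\<And>x y. x \<in> S \<Longrightarrow> y \<in> S \<Longrightarrow> 0 \<le> K x y"
    and "0 \<le> l" and drift: "\<And>x. x \<in> S \<Longrightarrow> killed_step K S V x \<le> l * V x"
    and V_ge: "\<And>x. x \<in> S \<Longrightarrow> a \<le> V x"
  shows "a * killed_mean K S \<mu> n (\<lambda>_. 1) \<le> l ^ n * (\<Sum>x\<in>S. \<mu> x * V x)"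
proof -
  have "a * killed_mean K S \<mu> n (\<lambda>_. 1) \<le> killed_mean K S \<mu> n V"
    unfolding killed_mean_cmult[symmetric] using V_ge by (intro killed_mean_mono[OF \<mu> K]) auto
  also have "\<dots> \<le> l ^ n * (\<Sum>x\<in>S. \<mu> x * V x)"
    using assms(1-4) by (rule killed_mean_lyapunov_decay)
  finally show ?thesis .
qed

lemma tail_hit0_eq_killed_mean: "tail_hit0 N \<mu> n = killed_mean (R N) {1..N-4} \<mu> n (\<lambda>_. 1)"
  unfolding tail_hit0_def killed_mean_def path_prob_def by simp

lemma R_nonneg:
  assumes N: "10 \<le> N" and x: "x \<in> {1..N-4}"
  shows "0 \<le> R N x y"
proof -
  have xr: "1 \<le> real x" "real x \<le> real N - 4" using x N by auto
  have Nr: "real N * (real N - 1) > 0" using N by simp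
  have "real x * (real N - real x) + (real N - real x - 1) \<le> (real x + 1) * (real N - real x)"
    by (simp add: algebra_simps)
  also have "\<dots> \<le> (real N - 3) * (real N - 1)" using xr by (intro mult_mono) auto
  also have "\<dots> \<le> real N * (real N - 1)" using xr by (intro mult_right_mono) auto
  finally have "(real x * (real N - real x) + (real N - real x - 1)) / (real N * (real N - 1)) \<le> 1"
    using Nr by simp
  moreover have "Rdown N x + Rup N x
      \<le> (real x * (real N - real x) + (real N - real x - 1)) / (real N * (real N - 1))"
    using Nr xr unfolding Rdown_def Rup_def add_divide_distrib by auto
  moreover have "0 \<le> Rdown N x" "0 \<le> Rup N x"
    using xr Nr unfolding Rdown_def Rup_def by auto
  ultimately show ?thesis unfolding R_def by auto
qed

lemma Rdown_minus_Rup_ge: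
  assumes "2 \<le> x" "x \<le> N - 4" "10 \<le> N"
  shows "1 / (real N * (real N - 1)) \<le> Rdown N x - Rup N x"
proof -
  have Nr: "real N * (real N - 1) > 0" using assms by simp
  have xr: "2 \<le> real x" "real x \<le> real N - 4" using assms by auto
  have "1 \<le> real x * (real N - real x) - (if x + 5 \<le> N then real N - real x - 1 else 0)"
  proof (cases "x + 5 \<le> N")
    case True
    have "0 \<le> (real x - 1) * (real N - real x)" using xr by simp
    then show ?thesis using True by (simp add: algebra_simps)
  next
    case False
    have "2 * 4 \<le> real x * (real N - real x)" using xr by (intro mult_mono) auto
    then show ?thesis using False by simp
  qed
  then have "1 / (real N * (real N - 1)) \<le>
      (real x * (real N - real x) - (if x + 5 \<le> N then real N - real x - 1 else 0))
      / (real N * (real N - 1))"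
    using Nr by (intro divide_right_mono) auto
  then show ?thesis
    unfolding Rdown_def Rup_def by (auto simp: diff_divide_distrib)
qed

lemma killed_step_R:
  assumes "1 \<le> x" "x \<le> N - 4"
  shows "killed_step (R N) {1..N-4} f x =
    (if 2 \<le> x then Rdown N x * f (x - 1) else 0) + (1 - Rdown N x - Rup N x) * f x
    + (if x + 1 \<le> N - 4 then Rup N x * f (x + 1) else 0)"
proof -
  have "killed_step (R N) {1..N-4} f x = (\<Sum>y\<in>{1..N-4}.
      (if y = x - 1 then Rdown N x * f y else 0) + (if y = x then (1 - Rdown N x - Rup N x) * f y else 0)
      + (if y = x + 1 then Rup N x * f y else 0))"
    unfolding killed_step_def using assms by (intro sum.cong) (auto simp: R_def)
  then show ?thesis
    using assms by (simp add: sum.distrib) linarith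
qed

definition lyap :: "nat \<Rightarrow> nat \<Rightarrow> real" where
  "lyap N x = 2 * real N - 1 + real x"

lemma killed_step_lyap_1_le:
  assumes N: "10 \<le> N"
  shows "killed_step (R N) {1..N-4} (lyap N) 1 \<le> 2 * real N - 1"
proof -
  have x: "1 \<le> (1::nat)" "1 \<le> N - 4" using N by auto
  have down: "Rdown N 1 = 1 / real N" using N unfolding Rdown_def by (simp add: field_simps)
  have "real N * 2 \<le> real N * real N" using N by (intro mult_left_mono) auto
  then have "real N * 2 \<le> 2 + real N * real N" by linarith
  then have up: "Rup N 1 \<le> 1" using N unfolding Rup_def by (simp add: field_simps)
  have "killed_step (R N) {1..N-4} (lyap N) 1 =
      (1 - Rdown N 1 - Rup N 1) * (2 * real N) + Rup N 1 * (2 * real N + 1)"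
    using N killed_step_R[OF x, where f = "lyap N"] by (auto simp: lyap_def)
  also have "\<dots> = 2 * real N - 2 + Rup N 1" using down N by (simp add: field_simps)
  finally show ?thesis using up by simp
qed

lemma killed_step_lyap_interior:
  assumes x: "2 \<le> x" "x \<le> N - 4"
  shows "killed_step (R N) {1..N-4} (lyap N) x = lyap N x - (Rdown N x - Rup N x)"
proof -
  have step: "killed_step (R N) {1..N-4} (lyap N) x =
      Rdown N x * lyap N (x - 1) + (1 - Rdown N x - Rup N x) * lyap N x
      + (if x + 1 \<le> N - 4 then Rup N x * lyap N (x + 1) else 0)"
    using x killed_step_R[of x N "lyap N"] by simp
  show ?thesis
  proof (cases "x + 1 \<le> N - 4")
    case True
    then show ?thesis using x step by (simp add: lyap_def of_nat_diff algebra_simps)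
  next
    case False
    then have "Rup N x = 0" unfolding Rup_def by simp
    then show ?thesis using x step False by (simp add: lyap_def of_nat_diff algebra_simps)
  qed
qed

lemma killed_step_lyap_le:
  assumes N: "10 \<le> N" and x: "1 \<le> x" "x \<le> N - 4"
  shows "killed_step (R N) {1..N-4} (lyap N) x \<le> (1 - 1 / (3 * real N ^ 3)) * lyap N x"
proof (cases "x = 1")
  case True
  have "1 * 3 \<le> real N * (real N * 3)" using N by (intro mult_mono) auto
  then have "2 * real N / (3 * real N ^ 3) \<le> 1" using N by (simp add: field_simps power3_eq_cube)
  then show ?thesis
    using True killed_step_lyap_1_le[OF N] by (simp add: lyap_def algebra_simps)
next
  case False
  then have x2: "2 \<le> x" using x by simp
  have "lyap N x / (3 * real N ^ 3) \<le> 3 * real N / (3 * real N ^ 3)"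
    using x N by (intro divide_right_mono) (auto simp: lyap_def)
  also have "\<dots> = 1 / (real N * real N)" using N by (simp add: field_simps power3_eq_cube)
  also have "\<dots> \<le> 1 / (real N * (real N - 1))" using N
    by (intro divide_left_mono mult_mono) auto
  also have "\<dots> \<le> Rdown N x - Rup N x"
    using Rdown_minus_Rup_ge[OF x2 x(2) N] .
  finally show ?thesis
    unfolding killed_step_lyap_interior[OF x2 x(2)] by (simp add: algebra_simps)
qed

lemma init_mean_lyap_le:
  assumes "init_law N \<mu>"
  shows "(\<Sum>x\<in>{1..N-4}. \<mu> x * lyap N x) \<le> 3 * real N"
proof -
  have "(\<Sum>x\<in>{1..N-4}. \<mu> x) \<le> (\<Sum>x\<le>N-4. \<mu> x)"
    using assms by (intro sum_mono2) (auto simp: init_law_def)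
  then have mass: "(\<Sum>x\<in>{1..N-4}. \<mu> x) \<le> 1"
    using assms by (simp add: init_law_def)
  have "(\<Sum>x\<in>{1..N-4}. \<mu> x * lyap N x) \<le> (\<Sum>x\<in>{1..N-4}. \<mu> x) * (3 * real N)"
    unfolding sum_distrib_right using assms
    by (intro sum_mono mult_left_mono) (auto simp: init_law_def lyap_def)
  also have "\<dots> \<le> 1 * (3 * real N)"
    using mass by (intro mult_right_mono) auto
  finally show ?thesis by simp
qed

theorem lemma5p7:
  shows "\<exists>c::real > 0. \<exists>N0::nat. \<forall>N \<ge> N0. \<forall>n::nat. \<forall>\<mu>. init_law N \<mu> \<longrightarrow>
           tail_hit0 N \<mu> n \<le> exp (1 - c * real n / real N ^ 3)"
proof (intro exI[of _ "1/3"] conjI exI[of _ 10] allI impI)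
  fix N n \<mu> assume N: "10 \<le> N" and \<mu>: "init_law N \<mu>"
  define e where "e = 1 / (3 * real N ^ 3)"
  have "1 \<le> real N ^ 3" using N by (intro one_le_power) simp
  then have e: "0 \<le> 1 - e" by (auto simp: e_def divide_le_eq_1)
  have "2 * real N * tail_hit0 N \<mu> n \<le> (1 - e) ^ n * (\<Sum>x\<in>{1..N-4}. \<mu> x * lyap N x)"
    unfolding tail_hit0_eq_killed_mean e_def using N \<mu> e[unfolded e_def]
    by (intro killed_mass_le_lyapunov R_nonneg killed_step_lyap_le)
       (auto simp: init_law_def lyap_def)
  also have "\<dots> \<le> (1 - e) ^ n * (3 * real N)"
    using init_mean_lyap_le[OF \<mu>] e by (intro mult_left_mono) auto
  finally have "tail_hit0 N \<mu> n \<le> 3/2 * (1 - e) ^ n"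
    using N by (simp add: field_simps)
  also have "\<dots> \<le> exp 1 * exp (- e) ^ n"
    using exp_ge_add_one_self[of 1] exp_ge_add_one_self[of "- e"] e
    by (intro mult_mono power_mono) auto
  also have "\<dots> = exp (1 - 1/3 * real n / real N ^ 3)"
    by (simp add: e_def exp_add[symmetric] exp_of_nat_mult[symmetric])
  finally show "tail_hit0 N \<mu> n \<le> exp (1 - 1/3 * real n / real N ^ 3)" .
qed simp

end
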